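(* Let $G$ be a torsion-free finitely generated residually finite group and $\phi\in\operatorname{Aut}(G)$. If $R(\phi)<\infty$, then $\operatorname{Stab}_\phi(g)=1$ for all $g\in G$.
   Context: For an endomorphism $\phi$ of $G$, $R(\phi)\in\mathbb{N}\cup\{\infty\}$ is the number of classes of the relation $x\sim hx\phi(h)^{-1}$ ($h\in G$). The $\phi$-stabiliser of $g\in G$ is $\operatorname{Stab}_\phi(g)=\{b\in G\mid g=bg\phi(b)^{-1}\}$. *)

theory Defs
  imports "HOL-Algebra.Algebra" "HOL-Library.Extended_Nat"
begin

definition torsion_free :: "('a, 'b) monoid_scheme \<Rightarrow> bool" where
  "torsion_free G \<longleftrightarrow>
     (\<forall>g \<in> carrier G. g \<noteq> \<one>\<^bsub>G\<^esub> \<longrightarrow> (\<forall>n::nat. n > 0 \<longrightarrow> g [^]\<^bsub>G\<^esub> n \<noteq> \<one>\<^bsub>G\<^esub>))"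

definition finitely_generated :: "('a, 'b) monoid_scheme \<Rightarrow> bool" where
  "finitely_generated G \<longleftrightarrow>
     (\<exists>S. finite S \<and> S \<subseteq> carrier G \<and> generate G S = carrier G)"

definition residually_finite :: "('a, 'b) monoid_scheme \<Rightarrow> bool" where
  "residually_finite G \<longleftrightarrow>
     (\<forall>g \<in> carrier G. g \<noteq> \<one>\<^bsub>G\<^esub> \<longrightarrow>
        (\<exists>N. N \<lhd> G \<and> finite (rcosets\<^bsub>G\<^esub> N) \<and> g \<notin> N))"

definition twisted_conj :: "('a, 'b) monoid_scheme \<Rightarrow> ('a \<Rightarrow> 'a) \<Rightarrow> ('a \<times> 'a) set" where
  "twisted_conj G \<phi> = {(x, y). x \<in> carrier G \<and> y \<in> carrier G \<and>
      (\<exists>h \<in> carrier G. y = h \<otimes>\<^bsub>G\<^esub> x \<otimes>\<^bsub>G\<^esub> inv\<^bsub>G\<^esub> (\<phi> h))}"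

definition reidemeister_number :: "('a, 'b) monoid_scheme \<Rightarrow> ('a \<Rightarrow> 'a) \<Rightarrow> enat" where
  "reidemeister_number G \<phi> =
     (if finite (carrier G // twisted_conj G \<phi>) then enat (card (carrier G // twisted_conj G \<phi>)) else \<infinity>)"

definition twisted_stab :: "('a, 'b) monoid_scheme \<Rightarrow> ('a \<Rightarrow> 'a) \<Rightarrow> 'a \<Rightarrow> 'a set" where
  "twisted_stab G \<phi> g = {b \<in> carrier G. g = b \<otimes>\<^bsub>G\<^esub> g \<otimes>\<^bsub>G\<^esub> inv\<^bsub>G\<^esub> (\<phi> b)}"

end

theory Submission
  imports Defs
begin

text \<open>Let \<open>K\<close> bound the denominators of any sum of \<open>R(\<phi>)\<close> unit fractions equal to \<open>1\<close> (Landau).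
  In a finite group the twisted classes \<open>C\<close> satisfy \<open>\<Sum>\<^sub>C 1 / |Stab(C)| = 1\<close>, so every twisted
  stabiliser has at most \<open>K\<close> elements, and passing to a quotient by a \<open>\<phi>\<close>-invariant normal subgroup
  does not increase the number of twisted classes. Now let \<open>b \<noteq> 1\<close> stabilise \<open>g\<close>. As \<open>G\<close> is
  torsion-free, \<open>b, \<dots>, b\<^sup>K\<close> are nontrivial; as \<open>G\<close> is finitely generated and residually finite, some
  \<open>\<phi>\<close>-invariant normal subgroup \<open>M\<close> of finite index contains none of them. The cosets of
  \<open>1, b, \<dots>, b\<^sup>K\<close> are then \<open>K + 1\<close> distinct elements of a twisted stabiliser in \<open>G / M\<close>.\<close>

section \<open>Landau's bound for unit fractions\<close>

text \<open>Removing the largest unit fraction \<open>1 / n\<close> from a sum \<open>a / b\<close> of \<open>r\<close> unit fractions forces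
  \<open>n \<le> r * b\<close> and leaves a sum of \<open>r - 1\<close> unit fractions with denominator \<open>b * n \<le> r * b * b\<close>.\<close>
fun landau_bound :: "nat \<Rightarrow> nat \<Rightarrow> nat" where
  "landau_bound 0 b = 0"
| "landau_bound (Suc r) b = max (Suc r * b) (landau_bound r (Suc r * b * b))"

lemma landau_bound_mono_denom: "b \<le> b' \<Longrightarrow> landau_bound r b \<le> landau_bound r b'"
proof (induction r arbitrary: b b')
  case (Suc r)
  have "Suc r * b * b \<le> Suc r * b' * b'"
    using Suc.prems by (intro mult_le_mono mult_le_mono2)
  then have "landau_bound r (Suc r * b * b) \<le> landau_bound r (Suc r * b' * b')"
    by (rule Suc.IH)
  moreover have "Suc r * b \<le> Suc r * b'"
    using Suc.prems by (rule mult_le_mono2)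
  ultimately show ?case
    by (simp only: landau_bound.simps max.mono)
qed simp

lemma landau_bound_mono_terms: "r \<le> r' \<Longrightarrow> landau_bound r b \<le> landau_bound r' b"
proof (induction r' arbitrary: b)
  case (Suc r')
  show ?case
  proof (cases "r = Suc r'")
    case False
    then have "landau_bound r b \<le> landau_bound r' b"
      using Suc by simp
    also have "\<dots> \<le> landau_bound r' (Suc r' * b * b)"
      by (rule landau_bound_mono_denom) (cases b, auto)
    finally show ?thesis by simp
  qed simp
qed simp

lemma unit_fraction_sum_min_denominator_le:
  assumes "finite I" "m \<in> I" "\<forall>i\<in>I. n m \<le> n i" "n m \<ge> 1"
    and sum: "(\<Sum>i\<in>I. 1 / real (n i)) = real a / real b" and "b \<ge> 1"
  shows "n m \<le> card I * b"
proof -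
  have "real a / real b \<le> real (card I) * (1 / real (n m))"
    unfolding sum[symmetric] using assms(3,4) by (intro sum_bounded_above) (simp add: frac_le)
  then have le: "real a * real (n m) \<le> real (card I) * real b"
    using assms(4,6) by (simp add: field_simps)
  have "1 / real (n m) \<le> (\<Sum>i\<in>I. 1 / real (n i))"
    using assms(1,2) by (intro member_le_sum) auto
  then have "a \<ge> 1"
    using assms(4,6) sum by (cases a) auto
  then have "real (n m) \<le> real a * real (n m)" by (simp add: mult_le_cancel_right1)
  with le show ?thesis by (metis of_nat_le_iff of_nat_mult order_trans)
qed

lemma unit_fraction_sum_bound:
  assumes "finite I" "\<forall>i\<in>I. n i \<ge> (1::nat)" "b \<ge> 1"
    and "(\<Sum>i\<in>I. 1 / real (n i)) = real a / real b" "i \<in> I"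
  shows "n i \<le> landau_bound (card I) b"
  using assms
proof (induction "card I" arbitrary: I a b i)
  case 0 then show ?case by simp
next
  case (Suc r)
  obtain m where m: "m \<in> I" "\<forall>j\<in>I. n m \<le> n j"
    using arg_min_if_finite[of I n] Suc.prems(1,5) by (metis empty_iff not_le)
  have nm: "n m \<ge> 1" using Suc.prems(2) m(1) by blast
  have nm_le: "n m \<le> Suc r * b"
    using unit_fraction_sum_min_denominator_le[OF Suc.prems(1) m nm Suc.prems(4,3)] Suc.hyps(2) by simp
  show ?case
  proof (cases "i = m")
    case True
    then show ?thesis using nm_le Suc.hyps(2)[symmetric] by simp
  next
    case False
    have split: "(\<Sum>j\<in>I. 1 / real (n j)) = 1 / real (n m) + (\<Sum>j\<in>I - {m}. 1 / real (n j))"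
      using Suc.prems(1) m(1) by (rule sum.remove)
    moreover have "(\<Sum>j\<in>I - {m}. 1 / real (n j)) \<ge> 0"
      by (rule sum_nonneg) simp
    ultimately have "1 / real (n m) \<le> real a / real b"
      using Suc.prems(4) by linarith
    then have "b \<le> a * n m"
      using nm Suc.prems(3) by (simp add: field_simps flip: of_nat_mult)
    then have rest: "(\<Sum>j\<in>I - {m}. 1 / real (n j)) = real (a * n m - b) / real (b * n m)"
      using split Suc.prems(3,4) nm by (simp add: of_nat_diff field_simps)
    have "n i \<le> landau_bound r (b * n m)"
      using Suc.hyps(1)[of "I - {m}", OF _ _ _ _ rest] Suc.prems Suc.hyps(2)[symmetric] m(1) False nm
      by (simp add: Suc_le_eq)
    also have "\<dots> \<le> landau_bound r (Suc r * b * b)"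
      by (rule landau_bound_mono_denom) (use nm_le in \<open>simp add: mult.commute mult.left_commute\<close>)
    finally show ?thesis using Suc.hyps(2)[symmetric] by simp
  qed
qed

section \<open>Twisted conjugacy as a group action\<close>

definition twisted_action :: "('a, 'b) monoid_scheme \<Rightarrow> ('a \<Rightarrow> 'a) \<Rightarrow> 'a \<Rightarrow> 'a \<Rightarrow> 'a" where
  "twisted_action G \<phi> h = (\<lambda>x \<in> carrier G. h \<otimes>\<^bsub>G\<^esub> x \<otimes>\<^bsub>G\<^esub> inv\<^bsub>G\<^esub> (\<phi> h))"

context group
begin

lemma twisted_action_mult:
  assumes "\<phi> \<in> hom G G" "h \<in> carrier G" "k \<in> carrier G"
  shows "twisted_action G \<phi> (h \<otimes> k) = compose (carrier G) (twisted_action G \<phi> h) (twisted_action G \<phi> k)"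
proof -
  interpret \<phi>: group_hom G G \<phi> using assms(1) by unfold_locales
  show ?thesis
    using assms(2,3) by (auto simp: twisted_action_def compose_def inv_mult_group m_assoc)
qed

lemma twisted_action_cancel:
  assumes "\<phi> \<in> hom G G" "k \<otimes> h = \<one>" "h \<in> carrier G" "k \<in> carrier G" "x \<in> carrier G"
  shows "twisted_action G \<phi> k (twisted_action G \<phi> h x) = x"
proof -
  interpret \<phi>: group_hom G G \<phi> using assms(1) by unfold_locales
  show ?thesis
    using fun_cong[OF twisted_action_mult[OF assms(1,4,3)], of x] assms(2-5)
    by (simp add: compose_def twisted_action_def)
qed

lemma twisted_action_closed:
  "\<phi> \<in> hom G G \<Longrightarrow> h \<in> carrier G \<Longrightarrow> x \<in> carrier G \<Longrightarrow> twisted_action G \<phi> h x \<in> carrier G"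
  by (simp add: twisted_action_def hom_in_carrier)

lemma twisted_action_bij:
  assumes "\<phi> \<in> hom G G" "h \<in> carrier G"
  shows "twisted_action G \<phi> h \<in> Bij (carrier G)"
proof -
  have "bij_betw (twisted_action G \<phi> h) (carrier G) (carrier G)"
  proof (rule bij_betw_byWitness[where f' = "twisted_action G \<phi> (inv h)"])
    show "\<forall>x\<in>carrier G. twisted_action G \<phi> (inv h) (twisted_action G \<phi> h x) = x"
      "\<forall>x\<in>carrier G. twisted_action G \<phi> h (twisted_action G \<phi> (inv h) x) = x"
      using twisted_action_cancel[OF assms(1)] assms(2) by simp_all
    show "twisted_action G \<phi> h ` carrier G \<subseteq> carrier G"
      "twisted_action G \<phi> (inv h) ` carrier G \<subseteq> carrier G"
      using twisted_action_closed[OF assms(1)] assms(2) by auto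
  qed
  then show ?thesis by (simp add: Bij_def twisted_action_def)
qed

lemma twisted_action_group_action:
  assumes "\<phi> \<in> hom G G"
  shows "group_action G (carrier G) (twisted_action G \<phi>)"
  unfolding group_action_def group_hom_def group_hom_axioms_def
proof (intro conjI is_group group_BijGroup homI)
  show "twisted_action G \<phi> h \<in> carrier (BijGroup (carrier G))" if "h \<in> carrier G" for h
    using twisted_action_bij[OF assms that] by (simp add: BijGroup_def)
  show "twisted_action G \<phi> (h \<otimes> k) =
      twisted_action G \<phi> h \<otimes>\<^bsub>BijGroup (carrier G)\<^esub> twisted_action G \<phi> k"
    if "h \<in> carrier G" "k \<in> carrier G" for h k
    using that twisted_action_bij[OF assms] twisted_action_mult[OF assms]
    by (simp add: BijGroup_def)
qed

lemma orbit_twisted_action: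
  "orbit G (twisted_action G \<phi>) x = twisted_conj G \<phi> `` {x}" if "\<phi> \<in> hom G G" "x \<in> carrier G"
  using that by (auto simp: orbit_def twisted_conj_def twisted_action_def hom_in_carrier)

lemma stabilizer_twisted_action:
  "stabilizer G (twisted_action G \<phi>) x = twisted_stab G \<phi> x" if "x \<in> carrier G"
  using that by (auto simp: stabilizer_def twisted_stab_def twisted_action_def)

lemma twisted_conj_equiv:
  assumes "\<phi> \<in> hom G G"
  shows "equiv (carrier G) (twisted_conj G \<phi>)"
proof -
  interpret A: group_action G "carrier G" "twisted_action G \<phi>"
    by (rule twisted_action_group_action[OF assms])
  have R: "(x, y) \<in> twisted_conj G \<phi> \<longleftrightarrow>
      x \<in> carrier G \<and> y \<in> carrier G \<and> y \<in> orbit G (twisted_action G \<phi>) x" for x y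
    using orbit_twisted_action[OF assms] by (auto simp: twisted_conj_def)
  show ?thesis
    by (rule equivI) (auto simp: refl_on_def sym_def trans_def R
        intro: A.orbit_refl A.orbit_sym A.orbit_trans)
qed

lemma twisted_classes_eq_orbits:
  "\<phi> \<in> hom G G \<Longrightarrow> carrier G // twisted_conj G \<phi> = orbits G (carrier G) (twisted_action G \<phi>)"
  by (auto simp: quotient_def orbits_def orbit_twisted_action) (metis orbit_twisted_action)

lemma twisted_stab_subgroup:
  assumes "\<phi> \<in> hom G G" "x \<in> carrier G"
  shows "subgroup (twisted_stab G \<phi> x) G"
  using group_action.stabilizer_subgroup[OF twisted_action_group_action[OF assms(1)] assms(2)]
  by (simp add: stabilizer_twisted_action[OF assms(2)])

lemma card_twisted_stab_le_landau_bound: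
  assumes "\<phi> \<in> hom G G" "finite (carrier G)" "x \<in> carrier G"
  shows "card (twisted_stab G \<phi> x) \<le> landau_bound (card (carrier G // twisted_conj G \<phi>)) 1"
proof -
  interpret A: group_action G "carrier G" "twisted_action G \<phi>"
    by (rule twisted_action_group_action[OF assms(1)])
  let ?orbit = "orbit G (twisted_action G \<phi>)"
  let ?O = "orbits G (carrier G) (twisted_action G \<phi>)"
  define n where "n C = order G div card C" for C :: "'a set"
  have order_pos: "order G > 0"
    using assms(2) by (simp add: order_gt_0_iff_finite)
  have orbit_stab: "card (?orbit y) * n (?orbit y) = order G"
    and n_orbit: "n (?orbit y) = card (twisted_stab G \<phi> y)" if "y \<in> carrier G" for y
  proof -
    have "card (?orbit y) * card (twisted_stab G \<phi> y) = order G"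
      using A.orbit_stabilizer_theorem[OF that] by (simp add: stabilizer_twisted_action[OF that])
    moreover from this have "card (?orbit y) > 0"
      using order_pos by (metis gr0I mult_0)
    ultimately show "n (?orbit y) = card (twisted_stab G \<phi> y)"
      unfolding n_def by (metis nonzero_mult_div_cancel_left less_not_refl)
    with \<open>card (?orbit y) * card (twisted_stab G \<phi> y) = order G\<close>
    show "card (?orbit y) * n (?orbit y) = order G" by simp
  qed
  have fin: "finite ?O"
    using assms(2) by (simp add: orbits_def)
  have "card = sum (\<lambda>_. 1::nat)"
    using card_eq_sum by blast
  then have "(\<Sum>C\<in>?O. card C) = order G"
    using A.disjoint_sum[OF assms(2), of "\<lambda>_. 1::nat"] by (simp add: order_def)
  moreover have class_eq: "real (card C) * real (n C) = real (order G)" if "C \<in> ?O" for C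
    using that orbit_stab by (auto simp: orbits_def simp flip: of_nat_mult)
  then have n_pos: "\<forall>C\<in>?O. n C \<ge> 1"
    using order_pos by (metis One_nat_def Suc_leI mult_zero_right neq0_conv of_nat_0 of_nat_eq_iff)
  have "(\<Sum>C\<in>?O. 1 / real (n C)) = (\<Sum>C\<in>?O. real (card C) / real (order G))"
  proof (rule sum.cong[OF refl])
    fix C assume C: "C \<in> ?O"
    then have "real (n C) > 0" using n_pos by fastforce
    then show "1 / real (n C) = real (card C) / real (order G)"
      using class_eq[OF C, symmetric] order_pos by (cases "card C = 0") (simp_all add: field_simps)
  qed
  ultimately have sum: "(\<Sum>C\<in>?O. 1 / real (n C)) = real 1 / real 1"
    using order_pos by (simp add: sum_divide_distrib[symmetric] flip: of_nat_sum)
  have "?orbit x \<in> ?O"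
    using assms(3) by (auto simp: orbits_def)
  then have "n (?orbit x) \<le> landau_bound (card ?O) 1"
    using unit_fraction_sum_bound[OF fin n_pos _ sum] by simp
  then show ?thesis
    using n_orbit[OF assms(3)] twisted_classes_eq_orbits[OF assms(1)] by simp
qed

end

section \<open>Twisted classes under equivariant homomorphisms\<close>

lemma card_image_le_if_factors:
  assumes "finite (q ` A)" "\<And>x y. x \<in> A \<Longrightarrow> y \<in> A \<Longrightarrow> q x = q y \<Longrightarrow> p x = p y"
  shows "finite (p ` A)" "card (p ` A) \<le> card (q ` A)"
proof -
  obtain f where "\<And>x. x \<in> A \<Longrightarrow> p x = f (q x)"
    using function_factors_left_gen[of "\<lambda>x. x \<in> A" q p] assms(2) by blast
  then have "p ` A = f ` q ` A"
    by (simp add: image_image cong: image_cong)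
  then show "finite (p ` A)" "card (p ` A) \<le> card (q ` A)"
    using assms(1) by (simp_all add: card_image_le)
qed

lemma (in group) rcos_eq_iff_mult_inv_mem:
  assumes "subgroup H G" "x \<in> carrier G" "y \<in> carrier G"
  shows "H #> x = H #> y \<longleftrightarrow> x \<otimes> inv y \<in> H"
proof
  assume "H #> x = H #> y"
  then show "x \<otimes> inv y \<in> H"
    using rcos_self[OF assms(2,1)] subgroup.rcos_module_imp[OF assms(1) is_group assms(3)] by simp
next
  assume "x \<otimes> inv y \<in> H"
  then have "x \<in> H #> y"
    using subgroup.rcos_module_rev[OF assms(1) is_group assms(3,2)] by blast
  then show "H #> x = H #> y"
    using repr_independence[OF _ assms(3,1)] by simp
qed

context group_hom
begin

lemma twisted_conj_image:
  assumes "\<phi> \<in> hom G G" "\<And>x. x \<in> carrier G \<Longrightarrow> \<beta> (h x) = h (\<phi> x)"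
    and "(x, y) \<in> twisted_conj G \<phi>"
  shows "(h x, h y) \<in> twisted_conj H \<beta>"
proof -
  obtain k where k: "x \<in> carrier G" "k \<in> carrier G" "y = k \<otimes>\<^bsub>G\<^esub> x \<otimes>\<^bsub>G\<^esub> inv\<^bsub>G\<^esub> \<phi> k"
    using assms(3) by (auto simp: twisted_conj_def)
  then have "h y = h k \<otimes>\<^bsub>H\<^esub> h x \<otimes>\<^bsub>H\<^esub> inv\<^bsub>H\<^esub> \<beta> (h k)" "h y \<in> carrier H"
    using assms(1,2) by (simp_all add: hom_in_carrier)
  moreover have "h x \<in> carrier H" "h k \<in> carrier H"
    using k by simp_all
  ultimately show ?thesis
    unfolding twisted_conj_def by blast
qed

lemma twisted_stab_image:
  assumes "\<phi> \<in> hom G G" "\<And>x. x \<in> carrier G \<Longrightarrow> \<beta> (h x) = h (\<phi> x)"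
    and "g \<in> carrier G" "b \<in> twisted_stab G \<phi> g"
  shows "h b \<in> twisted_stab H \<beta> (h g)"
proof -
  have b: "b \<in> carrier G" "g = b \<otimes>\<^bsub>G\<^esub> g \<otimes>\<^bsub>G\<^esub> inv\<^bsub>G\<^esub> \<phi> b"
    using assms(4) by (auto simp: twisted_stab_def)
  have "h g = h (b \<otimes>\<^bsub>G\<^esub> g \<otimes>\<^bsub>G\<^esub> inv\<^bsub>G\<^esub> \<phi> b)"
    using b(2) by (rule arg_cong)
  also have "\<dots> = h b \<otimes>\<^bsub>H\<^esub> h g \<otimes>\<^bsub>H\<^esub> inv\<^bsub>H\<^esub> \<beta> (h b)"
    using assms(1-3) b(1) by (simp add: hom_in_carrier)
  finally have "h g = h b \<otimes>\<^bsub>H\<^esub> h g \<otimes>\<^bsub>H\<^esub> inv\<^bsub>H\<^esub> \<beta> (h b)" .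
  then show ?thesis
    using \<open>b \<in> carrier G\<close> by (simp add: twisted_stab_def)
qed

lemma card_twisted_classes_image_le:
  assumes "\<phi> \<in> hom G G" "\<beta> \<in> hom H H" "\<And>x. x \<in> carrier G \<Longrightarrow> \<beta> (h x) = h (\<phi> x)"
    and "h ` carrier G = carrier H" "finite (carrier G // twisted_conj G \<phi>)"
  shows "card (carrier H // twisted_conj H \<beta>) \<le> card (carrier G // twisted_conj G \<phi>)"
proof -
  let ?RG = "twisted_conj G \<phi>" and ?RH = "twisted_conj H \<beta>"
  have classes_H: "carrier H // ?RH = (\<lambda>x. ?RH `` {h x}) ` carrier G"
    and classes_G: "carrier G // ?RG = (\<lambda>x. ?RG `` {x}) ` carrier G"
    unfolding quotient_def assms(4)[symmetric] by (simp_all add: UNION_singleton_eq_range image_image)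
  have factors: "?RH `` {h x} = ?RH `` {h y}"
    if "x \<in> carrier G" "y \<in> carrier G" "?RG `` {x} = ?RG `` {y}" for x y
  proof -
    have "(x, y) \<in> ?RG"
      using that eq_equiv_class_iff[OF G.twisted_conj_equiv[OF assms(1)]] by blast
    then show ?thesis
      using equiv_class_eq[OF H.twisted_conj_equiv[OF assms(2)]] twisted_conj_image[OF assms(1,3)] by blast
  qed
  have "card ((\<lambda>x. ?RH `` {h x}) ` carrier G) \<le> card ((\<lambda>x. ?RG `` {x}) ` carrier G)"
    by (rule card_image_le_if_factors(2)[OF _ factors]) (use assms(5) in \<open>simp only: classes_G\<close>)
  then show ?thesis
    unfolding classes_H classes_G .
qed

end

lemma (in normal) FactGroup_induced_endomorphism:
  assumes "\<phi> \<in> hom G G" "\<phi> ` H \<subseteq> H"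
  obtains \<alpha> where "\<alpha> \<in> hom (G Mod H) (G Mod H)" "\<And>x. x \<in> carrier G \<Longrightarrow> \<alpha> (H #> x) = H #> \<phi> x"
proof -
  interpret \<phi>: group_hom G G \<phi> using assms(1) by unfold_locales
  have hom: "(\<lambda>x. H #> \<phi> x) \<in> hom G (G Mod H)"
  proof (rule homI)
    fix x y assume "x \<in> carrier G" "y \<in> carrier G"
    then show "H #> \<phi> x \<in> carrier (G Mod H)"
      "H #> \<phi> (x \<otimes> y) = (H #> \<phi> x) \<otimes>\<^bsub>G Mod H\<^esub> (H #> \<phi> y)"
      using hom_in_carrier[OF r_coset_hom_Mod] by (simp_all add: rcos_sum)
  qed
  have factors: "H #> \<phi> x = H #> \<phi> y" if "x \<in> carrier G" "y \<in> carrier G" "H #> x = H #> y" for x y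
  proof -
    have "x \<otimes> inv y \<in> H"
      using that rcos_eq_iff_mult_inv_mem[OF subgroup_axioms] by blast
    then have "\<phi> x \<otimes> inv \<phi> y \<in> H"
      using that(1,2) assms(2) by auto
    then show ?thesis
      using that(1,2) rcos_eq_iff_mult_inv_mem[OF subgroup_axioms] by simp
  qed
  show ?thesis
    using FactGroup_universal[OF hom normal_axioms factors] that by blast
qed

section \<open>Subgroups of bounded index in finitely generated groups\<close>

context group
begin

lemma rcosets_mult_closed:
  assumes "subgroup H G" "C \<in> rcosets H" "g \<in> carrier G"
  shows "C #> g \<in> rcosets H"
proof -
  obtain x where x: "x \<in> carrier G" "C = H #> x"
    using assms(2) unfolding RCOSETS_def by auto
  then have "C #> g = H #> (x \<otimes> g)"
    using assms(1,3) by (simp add: coset_mult_assoc subgroup.subset)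
  then show ?thesis
    using x assms(3) by (simp add: rcosetsI subgroup.subset[OF assms(1)])
qed

definition coset_index_action :: "'a set \<Rightarrow> ('a set \<Rightarrow> nat) \<Rightarrow> 'a \<Rightarrow> nat \<Rightarrow> nat" where
  "coset_index_action H \<beta> g = (\<lambda>k \<in> {0..<card (rcosets H)}. \<beta> (inv_into (rcosets H) \<beta> k #> g))"

end

text \<open>A numbering \<open>\<beta>\<close> of the right cosets of \<open>H\<close> transports the action of \<open>G\<close> on them by right
  multiplication to an action on \<open>{0..<d}\<close>, where \<open>d\<close> is the index. Subgroups of the same index can
  then be compared through these actions.\<close>
locale coset_numbering = group +
  fixes H :: "'a set" and \<beta> :: "'a set \<Rightarrow> nat"
  assumes subgroup: "subgroup H G"
    and numbering: "bij_betw \<beta> (rcosets H) {0..<card (rcosets H)}"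
begin

abbreviation index :: nat where "index \<equiv> card (rcosets H)"
abbreviation coset :: "nat \<Rightarrow> 'a set" where "coset k \<equiv> inv_into (rcosets H) \<beta> k"
abbreviation action :: "'a \<Rightarrow> nat \<Rightarrow> nat" where "action \<equiv> coset_index_action H \<beta>"

lemma coset_in_rcosets: "k < index \<Longrightarrow> coset k \<in> rcosets H"
  and numbering_coset: "k < index \<Longrightarrow> \<beta> (coset k) = k"
  using numbering by (auto simp: bij_betw_def inv_into_into f_inv_into_f)

lemma coset_of_numbering: "C \<in> rcosets H \<Longrightarrow> coset (\<beta> C) = C"
  and numbering_less: "C \<in> rcosets H \<Longrightarrow> \<beta> C < index"
  and numbering_inj: "C \<in> rcosets H \<Longrightarrow> C' \<in> rcosets H \<Longrightarrow> \<beta> C = \<beta> C' \<Longrightarrow> C = C'"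
  using numbering by (auto simp: bij_betw_def inv_into_f_f inj_on_def)

lemma coset_subset_carrier: "k < index \<Longrightarrow> coset k \<subseteq> carrier G"
  using coset_in_rcosets rcosets_part_G[OF subgroup] by blast

lemma action_less: "g \<in> carrier G \<Longrightarrow> k < index \<Longrightarrow> action g k < index"
  unfolding coset_index_action_def
  using coset_in_rcosets rcosets_mult_closed[OF subgroup] numbering_less by auto

lemma action_one: "k < index \<Longrightarrow> action \<one> k = k"
  unfolding coset_index_action_def
  using numbering_coset coset_subset_carrier by simp

lemma action_mult:
  assumes "a \<in> carrier G" "b \<in> carrier G" "k < index"
  shows "action (a \<otimes> b) k = action b (action a k)"
proof -
  have C: "coset k #> a \<in> rcosets H" "coset k \<subseteq> carrier G"
    using rcosets_mult_closed[OF subgroup coset_in_rcosets] coset_subset_carrier assms by auto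
  have "action b (action a k) = \<beta> ((coset k #> a) #> b)"
    using action_less[OF assms(1,3)] assms(3) C(1)
    by (simp add: coset_index_action_def coset_of_numbering)
  also have "\<dots> = \<beta> (coset k #> (a \<otimes> b))"
    using assms C(2) by (simp add: coset_mult_assoc)
  finally show ?thesis
    using assms(3) by (simp add: coset_index_action_def)
qed

lemma action_inj:
  assumes "g \<in> carrier G" "k < index" "k' < index" "action g k = action g k'"
  shows "k = k'"
  using arg_cong[OF assms(4), of "action (inv g)"] action_mult[of g "inv g"] action_one assms(1-3)
  by simp

lemma action_inv:
  assumes "g \<in> carrier G" "k < index"
  shows "action g (action (inv g) k) = k"
  using action_mult[of "inv g" g k] action_one assms by simp

lemma mem_iff_action_fixes:
  assumes "g \<in> carrier G"
  shows "g \<in> H \<longleftrightarrow> action g (\<beta> H) = \<beta> H"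
proof -
  have H: "H \<in> rcosets H"
    using subgroup.subgroup_in_rcosets[OF subgroup is_group] .
  have "action g (\<beta> H) = \<beta> (H #> g)"
    using numbering_less[OF H] coset_of_numbering[OF H] by (simp add: coset_index_action_def)
  moreover have "\<beta> (H #> g) = \<beta> H \<longleftrightarrow> H #> g = H"
    using numbering_inj[OF rcosets_mult_closed[OF subgroup H assms] H] by auto
  moreover have "H #> g = H \<longleftrightarrow> g \<in> H"
    using coset_join1[OF _ assms subgroup] coset_join2[OF assms subgroup] by blast
  ultimately show ?thesis by simp
qed

end

lemma (in group) coset_index_action_eq_on_generate:
  assumes A1: "coset_numbering G H1 \<beta>1" and A2: "coset_numbering G H2 \<beta>2"
    and same_index: "card (rcosets H1) = card (rcosets H2)" and "S \<subseteq> carrier G"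
    and on_S: "\<And>s. s \<in> S \<Longrightarrow> coset_index_action H1 \<beta>1 s = coset_index_action H2 \<beta>2 s"
    and "g \<in> generate G S"
  shows "coset_index_action H1 \<beta>1 g = coset_index_action H2 \<beta>2 g"
  using \<open>g \<in> generate G S\<close>
proof (induction rule: generate.induct)
  case one
  show ?case
    using coset_numbering.action_one[OF A1] coset_numbering.action_one[OF A2] same_index
    by (auto simp: coset_index_action_def)
next
  case (incl h)
  then show ?case by (rule on_S)
next
  case (inv h)
  have h: "h \<in> carrier G"
    using inv \<open>S \<subseteq> carrier G\<close> by auto
  show ?case
  proof
    fix k
    show "coset_index_action H1 \<beta>1 (inv h) k = coset_index_action H2 \<beta>2 (inv h) k"
    proof (cases "k < card (rcosets H1)")
      case True
      let ?u = "coset_index_action H1 \<beta>1 (inv h) k" and ?v = "coset_index_action H2 \<beta>2 (inv h) k"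
      have "?u < card (rcosets H1)" "?v < card (rcosets H1)"
        using coset_numbering.action_less[OF A1, of "inv h"] coset_numbering.action_less[OF A2, of "inv h"]
          h True same_index by simp_all
      moreover have "coset_index_action H1 \<beta>1 h ?u = k" "coset_index_action H1 \<beta>1 h ?v = k"
        using coset_numbering.action_inv[OF A1 h True] coset_numbering.action_inv[OF A2 h, of k]
          True same_index on_S[OF inv] by simp_all
      ultimately show ?thesis
        using coset_numbering.action_inj[OF A1 h] by metis
    qed (use same_index in \<open>simp add: coset_index_action_def\<close>)
  qed
next
  case (eng h1 h2)
  have h: "h1 \<in> carrier G" "h2 \<in> carrier G"
    using eng(1,2) generate_in_carrier[OF \<open>S \<subseteq> carrier G\<close>] by auto
  show ?case
  proof
    fix k
    show "coset_index_action H1 \<beta>1 (h1 \<otimes> h2) k = coset_index_action H2 \<beta>2 (h1 \<otimes> h2) k"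
    proof (cases "k < card (rcosets H1)")
      case True
      then show ?thesis
        using coset_numbering.action_mult[OF A1 h True] coset_numbering.action_mult[OF A2 h, of k]
          same_index eng.IH by simp
    qed (use same_index in \<open>simp add: coset_index_action_def\<close>)
  qed
qed

text \<open>A subgroup of index \<open>d\<close> is determined by \<open>d\<close>, the number of the coset \<open>H\<close> itself and the
  action of the generators on \<open>{0..<d}\<close>; there are finitely many such data.\<close>
lemma (in group) finite_subgroups_bounded_index:
  assumes S: "finite S" "S \<subseteq> carrier G" "generate G S = carrier G"
  shows "finite {H. subgroup H G \<and> finite (rcosets H) \<and> card (rcosets H) \<le> D}"
proof -
  let ?F = "{H. subgroup H G \<and> finite (rcosets H) \<and> card (rcosets H) \<le> D}"
  let ?data = "\<Union>d\<in>{..D}. {d} \<times> {..<d} \<times> (S \<rightarrow>\<^sub>E ({0..<d} \<rightarrow>\<^sub>E {0..<d}))"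
  define describes where "describes H dat \<longleftrightarrow> (\<exists>\<beta>. coset_numbering G H \<beta> \<and>
      dat = (card (rcosets H), \<beta> H, restrict (coset_index_action H \<beta>) S))" for H dat
  have described: "\<exists>dat\<in>?data. describes H dat" if H: "H \<in> ?F" for H
  proof -
    obtain \<beta> where \<beta>: "bij_betw \<beta> (rcosets H) {0..<card (rcosets H)}"
      using ex_bij_betw_finite_nat H by blast
    interpret A: coset_numbering G H \<beta>
      using H \<beta> by (intro coset_numbering.intro coset_numbering_axioms.intro is_group) auto
    have "restrict A.action S \<in> S \<rightarrow>\<^sub>E ({0..<A.index} \<rightarrow>\<^sub>E {0..<A.index})"
      using A.action_less S(2) by (auto simp: coset_index_action_def)
    moreover have "\<beta> H < A.index"
      using A.numbering_less[OF subgroup.subgroup_in_rcosets[OF A.subgroup is_group]] .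
    ultimately show ?thesis
      unfolding describes_def using H A.coset_numbering_axioms by blast
  qed
  have unique: "H1 = H2"
    if H: "H1 \<in> ?F" "H2 \<in> ?F" and d: "describes H1 dat" "describes H2 dat" for H1 H2 dat
  proof -
    obtain \<beta>1 \<beta>2 where A1: "coset_numbering G H1 \<beta>1" and A2: "coset_numbering G H2 \<beta>2"
      and same: "card (rcosets H1) = card (rcosets H2)" "\<beta>1 H1 = \<beta>2 H2"
        "restrict (coset_index_action H1 \<beta>1) S = restrict (coset_index_action H2 \<beta>2) S"
      using d unfolding describes_def by auto
    have "coset_index_action H1 \<beta>1 s = coset_index_action H2 \<beta>2 s" if "s \<in> S" for s
      using fun_cong[OF same(3), of s] that by simp
    then have action_eq: "coset_index_action H1 \<beta>1 g = coset_index_action H2 \<beta>2 g"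
      if "g \<in> carrier G" for g
      using coset_index_action_eq_on_generate[OF A1 A2 same(1) S(2)] that S(3) by blast
    have "g \<in> H1 \<longleftrightarrow> g \<in> H2" if "g \<in> carrier G" for g
      unfolding coset_numbering.mem_iff_action_fixes[OF A1 that]
        coset_numbering.mem_iff_action_fixes[OF A2 that] action_eq[OF that] same(2) ..
    moreover have "H1 \<subseteq> carrier G" "H2 \<subseteq> carrier G"
      using H subgroup.subset by auto
    ultimately show ?thesis
      by blast
  qed
  have "finite ?data"
    using S(1) by (auto intro!: finite_PiE)
  moreover have "?F \<subseteq> (\<lambda>dat. THE H. H \<in> ?F \<and> describes H dat) ` ?data"
  proof
    fix H assume "H \<in> ?F"
    obtain dat where "dat \<in> ?data" "describes H dat"
      using described[OF \<open>H \<in> ?F\<close>] by blast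
    then show "H \<in> (\<lambda>dat. THE H. H \<in> ?F \<and> describes H dat) ` ?data"
      using unique \<open>H \<in> ?F\<close> by (intro image_eqI[where x = dat] the_equality[symmetric]) blast+
  qed
  ultimately show ?thesis
    by (rule finite_surj)
qed

section \<open>Invariant normal subgroups of finite index\<close>

context group
begin

lemma rcosets_eq_image: "rcosets H = (\<lambda>x. H #> x) ` carrier G"
  unfolding RCOSETS_def by auto

lemma normal_preimage:
  assumes "\<phi> \<in> hom G G" "N \<lhd> G" "finite (rcosets N)"
  defines "N' \<equiv> {x \<in> carrier G. \<phi> x \<in> N}"
  shows "N' \<lhd> G" "finite (rcosets N')" "card (rcosets N') \<le> card (rcosets N)"
proof -
  interpret \<phi>: group_hom G G \<phi> using assms(1) by unfold_locales
  interpret N: normal N G by (rule assms(2))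
  have subgroup: "subgroup N' G"
    unfolding N'_def by (rule subgroupI) (auto simp: N.m_inv_closed N.m_closed)
  show "N' \<lhd> G"
  proof (rule normal_invI[OF subgroup])
    fix x h assume "x \<in> carrier G" "h \<in> N'"
    then show "x \<otimes> h \<otimes> inv x \<in> N'"
      using normal_invE(2)[OF assms(2), of "\<phi> x" "\<phi> h"] by (auto simp: N'_def)
  qed
  have factors: "N' #> x = N' #> y" if "x \<in> carrier G" "y \<in> carrier G" "N #> \<phi> x = N #> \<phi> y" for x y
  proof -
    have "\<phi> x \<otimes> inv (\<phi> y) \<in> N"
      using that rcos_eq_iff_mult_inv_mem[OF N.subgroup_axioms] by simp
    then have "x \<otimes> inv y \<in> N'"
      using that by (simp add: N'_def)
    then show ?thesis
      using rcos_eq_iff_mult_inv_mem[OF subgroup that(1,2)] by simp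
  qed
  have image_sub: "(\<lambda>x. N #> \<phi> x) ` carrier G \<subseteq> rcosets N"
    by (auto simp: rcosets_eq_image)
  then have "finite ((\<lambda>x. N #> \<phi> x) ` carrier G)"
    using assms(3) finite_subset by blast
  then have "finite (rcosets N')" "card (rcosets N') \<le> card ((\<lambda>x. N #> \<phi> x) ` carrier G)"
    unfolding rcosets_eq_image[of N'] using card_image_le_if_factors[OF _ factors] by simp_all
  then show "finite (rcosets N')" "card (rcosets N') \<le> card (rcosets N)"
    using card_mono[OF assms(3) image_sub] by simp_all
qed

lemma normal_Inter:
  assumes "\<A> \<noteq> {}" "\<And>N. N \<in> \<A> \<Longrightarrow> N \<lhd> G"
  shows "\<Inter>\<A> \<lhd> G"
proof (rule normal_invI)
  show "subgroup (\<Inter>\<A>) G"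
    using assms by (intro subgroups_Inter) (auto intro: normal_imp_subgroup)
  show "x \<otimes> h \<otimes> inv x \<in> \<Inter>\<A>" if "x \<in> carrier G" "h \<in> \<Inter>\<A>" for x h
    using that assms(2) normal_invE(2) by blast
qed

lemma finite_index_Inter:
  assumes "finite \<A>" "\<A> \<noteq> {}" "\<And>H. H \<in> \<A> \<Longrightarrow> subgroup H G \<and> finite (rcosets H)"
  shows "finite (rcosets (\<Inter>\<A>))"
proof -
  let ?cosets = "\<lambda>x. \<lambda>H\<in>\<A>. H #> x"
  have "?cosets ` carrier G \<subseteq> (\<Pi>\<^sub>E H\<in>\<A>. rcosets H)"
    by (auto simp: rcosets_eq_image)
  moreover have "finite (\<Pi>\<^sub>E H\<in>\<A>. rcosets H)"
    using assms(1,3) by (simp add: finite_PiE)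
  ultimately have "finite (?cosets ` carrier G)"
    by (rule finite_subset)
  moreover have factors: "\<Inter>\<A> #> x = \<Inter>\<A> #> y"
    if "x \<in> carrier G" "y \<in> carrier G" "?cosets x = ?cosets y" for x y
  proof -
    have "H #> x = H #> y" if "H \<in> \<A>" for H
      using fun_cong[OF \<open>?cosets x = ?cosets y\<close>, of H] that by simp
    then have "x \<otimes> inv y \<in> \<Inter>\<A>"
      using rcos_eq_iff_mult_inv_mem assms(3) that(1,2) by blast
    moreover have "subgroup (\<Inter>\<A>) G"
      using assms(2,3) by (intro subgroups_Inter) auto
    ultimately show ?thesis
      using rcos_eq_iff_mult_inv_mem that(1,2) by blast
  qed
  ultimately show ?thesis
    unfolding rcosets_eq_image[of "\<Inter>\<A>"] by (rule card_image_le_if_factors(1))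
qed

text \<open>The intersection of all normal subgroups of index at most \<open>D\<close> is a finite intersection,
  because \<open>G\<close> is finitely generated, and it is \<open>\<phi>\<close>-invariant because \<open>\<phi>\<close> pulls normal subgroups
  back to normal subgroups of no larger index. Residual finiteness separates it from \<open>T\<close> once \<open>D\<close> is
  large.\<close>
lemma invariant_normal_subgroup_avoiding:
  assumes "finitely_generated G" "residually_finite G" "\<phi> \<in> hom G G"
    and "finite T" "T \<subseteq> carrier G" "\<one> \<notin> T"
  obtains M where "M \<lhd> G" "finite (rcosets M)" "\<phi> ` M \<subseteq> M" "T \<inter> M = {}"
proof -
  obtain S where S: "finite S" "S \<subseteq> carrier G" "generate G S = carrier G"
    using assms(1) unfolding finitely_generated_def by blast
  have "\<exists>N. N \<lhd> G \<and> finite (rcosets N) \<and> t \<notin> N" if "t \<in> T" for t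
    using assms(2,5,6) that unfolding residually_finite_def by (metis subsetD)
  then obtain N where N: "\<And>t. t \<in> T \<Longrightarrow> N t \<lhd> G \<and> finite (rcosets (N t)) \<and> t \<notin> N t"
    by metis
  define D where "D = Max (insert 1 ((\<lambda>t. card (rcosets (N t))) ` T))"
  define \<F> where "\<F> = {H. H \<lhd> G \<and> finite (rcosets H) \<and> card (rcosets H) \<le> D}"
  have "\<F> \<subseteq> {H. subgroup H G \<and> finite (rcosets H) \<and> card (rcosets H) \<le> D}"
    unfolding \<F>_def using normal_imp_subgroup by blast
  then have "finite \<F>"
    using finite_subgroups_bounded_index[OF S] by (rule finite_subset)
  have "rcosets (carrier G) = {carrier G}"
    unfolding rcosets_eq_image using coset_join2[OF _ subgroup_self] by auto
  then have "carrier G \<in> \<F>"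
    unfolding \<F>_def D_def using normal_self assms(4) by simp
  then have "\<F> \<noteq> {}" by blast
  have N_in: "N t \<in> \<F>" if "t \<in> T" for t
    unfolding \<F>_def D_def using N[OF that] assms(4) that by simp
  have invariant: "\<phi> x \<in> H" if "x \<in> \<Inter>\<F>" "H \<in> \<F>" for x H
  proof -
    have "{y \<in> carrier G. \<phi> y \<in> H} \<in> \<F>"
      using normal_preimage[OF assms(3)] \<open>H \<in> \<F>\<close> unfolding \<F>_def by (auto intro: order_trans)
    then show ?thesis
      using that(1) by blast
  qed
  show ?thesis
  proof (rule that)
    show "\<Inter>\<F> \<lhd> G"
      using \<open>\<F> \<noteq> {}\<close> by (rule normal_Inter) (simp add: \<F>_def)
    show "finite (rcosets (\<Inter>\<F>))"
      using \<open>finite \<F>\<close> \<open>\<F> \<noteq> {}\<close> by (rule finite_index_Inter) (auto simp: \<F>_def normal_imp_subgroup)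
    show "\<phi> ` \<Inter>\<F> \<subseteq> \<Inter>\<F>"
      using invariant by blast
    show "T \<inter> \<Inter>\<F> = {}"
      using N N_in by blast
  qed
qed

end

section \<open>Twisted stabilisers\<close>

lemma (in group) rcos_nat_pow_inj_on:
  fixes K :: nat
  assumes "subgroup H G" "b \<in> carrier G" "\<And>i. i \<in> {1..K} \<Longrightarrow> b [^] i \<notin> H"
  shows "inj_on (\<lambda>i. H #> b [^] i) {0..K}"
proof (rule linorder_inj_onI')
  fix i j :: nat assume "i \<in> {0..K}" "j \<in> {0..K}" "i < j"
  have "b [^] (j - i) \<otimes> b [^] i = b [^] j"
    using assms(2) \<open>i < j\<close> by (simp add: nat_pow_mult)
  then have "b [^] j \<otimes> inv (b [^] i) = b [^] (j - i)"
    using assms(2) by (simp add: inv_solve_right')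
  moreover have "j - i \<in> {1..K}"
    using \<open>i < j\<close> \<open>j \<in> {0..K}\<close> by auto
  then have "b [^] (j - i) \<notin> H"
    by (rule assms(3))
  ultimately have "H #> b [^] j \<noteq> H #> b [^] i"
    using rcos_eq_iff_mult_inv_mem[OF assms(1)] assms(2) by simp
  then show "H #> b [^] i \<noteq> H #> b [^] j"
    by (rule not_sym)
qed

lemma (in group) twisted_stab_nat_pow_eq_one:
  assumes "finitely_generated G" "residually_finite G" "\<phi> \<in> hom G G"
    and "finite (carrier G // twisted_conj G \<phi>)" "g \<in> carrier G" "b \<in> twisted_stab G \<phi> g"
  shows "\<exists>i \<in> {1..landau_bound (card (carrier G // twisted_conj G \<phi>)) 1}. b [^] i = \<one>"
proof (rule ccontr)
  define K where "K = landau_bound (card (carrier G // twisted_conj G \<phi>)) 1"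
  have b: "b \<in> carrier G"
    using assms(6) by (simp add: twisted_stab_def)
  assume "\<not> ?thesis"
  then have "\<one> \<notin> (\<lambda>i. b [^] i) ` {1..K}"
    unfolding K_def by force
  moreover have "finite ((\<lambda>i. b [^] i) ` {1..K})" "(\<lambda>i. b [^] i) ` {1..K} \<subseteq> carrier G"
    using b by auto
  ultimately obtain M where M: "M \<lhd> G" "finite (rcosets M)" "\<phi> ` M \<subseteq> M"
    and avoids: "(\<lambda>i. b [^] i) ` {1..K} \<inter> M = {}"
    using invariant_normal_subgroup_avoiding[OF assms(1-3)] by blast
  interpret M: normal M G by (rule M(1))
  obtain \<alpha> where \<alpha>: "\<alpha> \<in> hom (G Mod M) (G Mod M)" "\<And>x. x \<in> carrier G \<Longrightarrow> \<alpha> (M #> x) = M #> \<phi> x"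
    using M.FactGroup_induced_endomorphism[OF assms(3) M(3)] by blast
  interpret \<pi>: group_hom G "G Mod M" "\<lambda>x. M #> x"
    by (intro group_hom.intro group_hom_axioms.intro is_group M.factorgroup_is_group M.r_coset_hom_Mod)
  let ?stab = "twisted_stab (G Mod M) \<alpha> (M #> g)"
  have "inj_on (\<lambda>i. M #> b [^] i) {0..K}"
    using avoids M.subgroup_axioms b by (intro rcos_nat_pow_inj_on) blast+
  then have "Suc K = card ((\<lambda>i. M #> b [^] i) ` {0..K})"
    by (simp add: card_image)
  also have "\<dots> \<le> card ?stab"
  proof (rule card_mono)
    show "finite ?stab"
      using M(2) by (simp add: twisted_stab_def FactGroup_def)
    show "(\<lambda>i. M #> b [^] i) ` {0..K} \<subseteq> ?stab"
      using twisted_stab_subgroup[OF assms(3,5)] assms(3,5,6) \<alpha>(2)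
      by (auto intro!: \<pi>.twisted_stab_image simp: subgroup_int_pow_closed[where k = "int _", simplified int_pow_int])
  qed
  also have "\<dots> \<le> landau_bound (card (carrier (G Mod M) // twisted_conj (G Mod M) \<alpha>)) 1"
    using M(2) assms(5) by (intro group.card_twisted_stab_le_landau_bound M.factorgroup_is_group \<alpha>(1))
      (auto simp: FactGroup_def intro: rcosetsI M.subset)
  also have "\<dots> \<le> K"
    unfolding K_def using \<alpha> assms(3,4)
    by (intro landau_bound_mono_terms \<pi>.card_twisted_classes_image_le) (simp_all add: carrier_FactGroup)
  finally show False by simp
qed

theorem mainTheorem11:
  fixes G :: "('a, 'b) monoid_scheme" and \<phi> :: "'a \<Rightarrow> 'a"
  assumes "group G"
    and "torsion_free G"
    and "finitely_generated G"
    and "residually_finite G"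
    and "\<phi> \<in> iso G G"
    and "reidemeister_number G \<phi> < \<infinity>"
  shows "\<forall>g \<in> carrier G. twisted_stab G \<phi> g = {\<one>\<^bsub>G\<^esub>}"
proof
  interpret group G by (rule assms(1))
  fix g assume g: "g \<in> carrier G"
  have hom: "\<phi> \<in> hom G G"
    using assms(5) by (simp add: iso_def)
  have "finite (carrier G // twisted_conj G \<phi>)"
    using assms(6) by (simp add: reidemeister_number_def split: if_splits)
  then have "b = \<one>\<^bsub>G\<^esub>" if "b \<in> twisted_stab G \<phi> g" for b
    using twisted_stab_nat_pow_eq_one[OF assms(3,4) hom _ g that] assms(2) that
    unfolding torsion_free_def twisted_stab_def by force
  moreover have "\<one>\<^bsub>G\<^esub> \<in> twisted_stab G \<phi> g"
    using subgroup.one_closed[OF twisted_stab_subgroup[OF hom g]] .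
  ultimately show "twisted_stab G \<phi> g = {\<one>\<^bsub>G\<^esub>}"
    by blast
qed

end
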